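(* Let $I=\langle N,M,V\rangle$ be an ordered instance of goods and let $B\subseteq M$ be a bundle with $v_i(B)\ge\mu_i$ for some agent $i\in N$. If every agent $i'\in N\setminus\{i\}$ has an MMS partition containing a bundle $B_{i'}$ with $B_{i'}\succeq B$, then allocating $B$ to $i$ is a valid reduction.
   Context: An instance $I=\langle N,M,V\rangle$ has agents $N=\{1,\dots,n\}$, goods $M=\{1,\dots,m\}$ and additive valuations $v_i$ with $v_i(\emptyset)=0$, $v_i(S)=\sum_{g\in S}v_i(\{g\})$, $v_{ij}:=v_i(\{j\})\ge 0$. It is ordered if $v_{ij}\ge v_{i(j+1)}$ for all $i$ and $1\le j<m$. An allocation ($n$-partition) is an ordered $n$-tuple of pairwise disjoint, possibly empty subsets of $M$ with union $M$. The maximin share of $i$ in $I$ is $\mu_i=\mu_i^I=\max_A\min_j v_i(A_j)$ over all allocations $A$; an MMS partition of $i$ is an allocation $A$ with $v_i(A_j)\ge\mu_i$ for all $j$. For $B,B'\subseteq M$, $B$ dominates $B'$, written $B\succeq B'$, if there is an injective map $f:B'\to B$ with $f(j)\le j$ for all $j\in B'$. Removing agents $N'\subseteq N$ and items $M'\subseteq M$ is a valid reduction if the items of $M'$ can be allocated to the agents of $N'$ so that each $i'\in N'$ receives a bundle $B_{i'}$ with $v_{i'}(B_{i'})\ge\mu_{i'}^I$, and every $i\in N\setminus N'$ satisfies $\mu_i^{I'}\ge\mu_i^I$, where $I'=\langle N\setminus N', M\setminus M', V\rangle$ (valuations restricted, maximin share computed with $|N\setminus N'|$ bundles). "Allocating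 $B$ to $i$ is a valid reduction" means this holds with $N'=\{i\}$, $M'=B$. *)

theory Defs
  imports Complex_Main
begin

(* Agents are 1..n, goods are 1..m (natural numbers); a valuation profile is
   v :: nat => nat => real with v i j = v_i({j}); additive: v_i(S) = sum (v i) S. *)

definition val :: "(nat \<Rightarrow> nat \<Rightarrow> real) \<Rightarrow> nat \<Rightarrow> nat set \<Rightarrow> real" where
  "val v i S = sum (v i) S"

definition ordered_instance :: "nat \<Rightarrow> nat \<Rightarrow> (nat \<Rightarrow> nat \<Rightarrow> real) \<Rightarrow> bool" where
  "ordered_instance n m v \<longleftrightarrow>
     (\<forall>i\<in>{1..n}. \<forall>j\<in>{1..m}. v i j \<ge> 0) \<and>
     (\<forall>i\<in>{1..n}. \<forall>j. 1 \<le> j \<and> j < m \<longrightarrow> v i j \<ge> v i (j + 1))"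

definition is_partition :: "nat \<Rightarrow> nat set \<Rightarrow> (nat \<Rightarrow> nat set) \<Rightarrow> bool" where
  "is_partition k S A \<longleftrightarrow>
     (\<forall>j\<in>{1..k}. A j \<subseteq> S) \<and>
     (\<forall>j\<in>{1..k}. \<forall>j'\<in>{1..k}. j \<noteq> j' \<longrightarrow> A j \<inter> A j' = {}) \<and>
     (\<Union>j\<in>{1..k}. A j) = S"

definition mms :: "(nat \<Rightarrow> nat \<Rightarrow> real) \<Rightarrow> nat \<Rightarrow> nat \<Rightarrow> nat set \<Rightarrow> real" where
  "mms v i k S = Max {Min ((\<lambda>j. val v i (A j)) ` {1..k}) | A. is_partition k S A}"

definition mms_partition :: "(nat \<Rightarrow> nat \<Rightarrow> real) \<Rightarrow> nat \<Rightarrow> nat \<Rightarrow> nat set \<Rightarrow> (nat \<Rightarrow> nat set) \<Rightarrow> bool" where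
  "mms_partition v i k S A \<longleftrightarrow> is_partition k S A \<and> (\<forall>j\<in>{1..k}. val v i (A j) \<ge> mms v i k S)"

definition dominates :: "nat set \<Rightarrow> nat set \<Rightarrow> bool" where
  "dominates B B' \<longleftrightarrow> (\<exists>f. inj_on f B' \<and> f ` B' \<subseteq> B \<and> (\<forall>j\<in>B'. f j \<le> j))"

definition valid_reduction :: "nat \<Rightarrow> nat \<Rightarrow> (nat \<Rightarrow> nat \<Rightarrow> real) \<Rightarrow> nat set \<Rightarrow> nat set \<Rightarrow> bool" where
  "valid_reduction n m v N' M' \<longleftrightarrow>
     N' \<subseteq> {1..n} \<and> M' \<subseteq> {1..m} \<and>
     (\<exists>Bs. (\<forall>a\<in>N'. Bs a \<subseteq> M') \<and>
           (\<forall>a\<in>N'. \<forall>a'\<in>N'. a \<noteq> a' \<longrightarrow> Bs a \<inter> Bs a' = {}) \<and>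
           (\<Union>a\<in>N'. Bs a) = M' \<and>
           (\<forall>a\<in>N'. val v a (Bs a) \<ge> mms v a n {1..m})) \<and>
     (\<forall>a\<in>{1..n} - N'. mms v a (n - card N') ({1..m} - M') \<ge> mms v a n {1..m})"

end

(*
  Fix an agent a other than i, an MMS partition A of a and a bundle A j dominating B.
  Items of B that already lie in A j can be matched with themselves, so the domination
  yields an injection g from B - A j into A j - B that never moves an item to a later
  position. Discard A j and let every other bundle A k trade its items from B for their
  g-images: since the instance is ordered, this does not decrease the value for a. The
  resulting n - 1 disjoint bundles of M - B are each worth at least the old maximin share
  of a, and the unused items of A j can be added to any of them.
*)
theory Submission
  imports Defs "HOL-Library.FuncSet"
begin

lemma dominates_Diff_singleton:
  assumes "dominates B B'" "c \<in> B" "c \<in> B'"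
  shows "dominates (B - {c}) (B' - {c})"
proof -
  obtain f where f: "inj_on f B'" "f ` B' \<subseteq> B" "\<forall>x\<in>B'. f x \<le> x"
    using assms(1) unfolding dominates_def by blast
  have fc: "f c \<noteq> f x" if "x \<in> B' - {c}" for x
    using that assms(3) inj_onD[OF f(1)] by blast
  define f' where "f' x = (if f x = c then f c else f x)" for x
  have "inj_on f' (B' - {c})"
  proof (rule inj_onI)
    fix x y assume x: "x \<in> B' - {c}" and y: "y \<in> B' - {c}" and "f' x = f' y"
    with fc[OF x] fc[OF y] have "f x = f y"
      unfolding f'_def by (simp split: if_split_asm)
    then show "x = y" using x y inj_onD[OF f(1)] by blast
  qed
  moreover have "f' x \<in> B - {c}" "f' x \<le> x" if x: "x \<in> B' - {c}" for x
  proof -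
    have "f c \<in> B" "f x \<in> B" "f c \<le> c" "f x \<le> x" using x f(2,3) assms(3) by auto
    then show "f' x \<in> B - {c}" "f' x \<le> x"
      using fc[OF x] unfolding f'_def by auto
  qed
  ultimately show ?thesis unfolding dominates_def by blast
qed

lemma dominates_Diff_common:
  assumes "finite F" "F \<subseteq> B \<inter> B'" "dominates B B'"
  shows "dominates (B - F) (B' - F)"
  using assms
proof (induction F rule: finite_induct)
  case empty
  then show ?case by simp
next
  case (insert c F)
  then have "dominates (B - F) (B' - F)" by simp
  then have "dominates (B - F - {c}) (B' - F - {c})"
    using dominates_Diff_singleton insert.hyps(2) insert.prems(1) by blast
  moreover have "B - insert c F = B - F - {c}" "B' - insert c F = B' - F - {c}" by auto
  ultimately show ?case by (simp only:)
qed

lemma dominates_Diff: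
  assumes "finite B'" "dominates B B'"
  shows "dominates (B - B') (B' - B)"
proof -
  have "finite (B \<inter> B')" using assms(1) by simp
  then have "dominates (B - B \<inter> B') (B' - B \<inter> B')"
    using dominates_Diff_common assms(2) by blast
  moreover have "B - B \<inter> B' = B - B'" "B' - B \<inter> B' = B' - B" by auto
  ultimately show ?thesis by (simp only:)
qed

lemma ordered_instance_antimono:
  assumes "ordered_instance n m v" "a \<in> {1..n}" "1 \<le> x" "x \<le> y" "y \<le> m"
  shows "v a y \<le> v a x"
  using assms(4,5)
proof (induction y rule: dec_induct)
  case base
  then show ?case by simp
next
  case (step k)
  then have "v a (k + 1) \<le> v a k" using assms(1,2,3) unfolding ordered_instance_def by auto
  then show ?case using step by simp
qed

lemma val_le_if_dominates:
  assumes "ordered_instance n m v" "a \<in> {1..n}" "S \<subseteq> {1..m}" "D \<subseteq> {1..m}" "dominates D S"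
  shows "val v a S \<le> val v a D"
proof -
  obtain f where f: "inj_on f S" "f ` S \<subseteq> D" "\<forall>x\<in>S. f x \<le> x"
    using assms(5) unfolding dominates_def by blast
  have "val v a S \<le> (\<Sum>x\<in>S. v a (f x))"
    unfolding val_def
  proof (rule sum_mono)
    fix x assume "x \<in> S"
    moreover have "f x \<in> {1..m}" using f(2) assms(4) \<open>x \<in> S\<close> by blast
    ultimately show "v a x \<le> v a (f x)"
      using f(3) assms(3) by (intro ordered_instance_antimono[OF assms(1,2)]) auto
  qed
  also have "\<dots> = val v a (f ` S)"
    unfolding val_def by (simp add: sum.reindex f(1))
  also have "\<dots> \<le> val v a D"
    unfolding val_def using assms(1,2,4) f(2) finite_subset[OF assms(4)]
    by (intro sum_mono2) (auto simp: ordered_instance_def)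
  finally show ?thesis .
qed

lemma mms_ge_if_partition:
  assumes "finite S" "k \<ge> 1" "is_partition k S C" "\<forall>j\<in>{1..k}. t \<le> val v a (C j)"
  shows "t \<le> mms v a k S"
proof -
  let ?worst = "\<lambda>A. Min ((\<lambda>j. val v a (A j)) ` {1..k})"
  \<comment> \<open>The set under Max is finite since a partition only matters through its restriction to {1..k}.\<close>
  have "{?worst A | A. is_partition k S A} \<subseteq> ?worst ` (PiE {1..k} (\<lambda>_. Pow S))"
  proof
    fix y assume "y \<in> {?worst A | A. is_partition k S A}"
    then obtain A where A: "is_partition k S A" "y = ?worst A" by auto
    have "restrict A {1..k} \<in> PiE {1..k} (\<lambda>_. Pow S)"
      using A(1) unfolding is_partition_def by auto
    moreover have "(\<lambda>j. val v a (restrict A {1..k} j)) ` {1..k} = (\<lambda>j. val v a (A j)) ` {1..k}"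
      by (rule image_cong) auto
    then have "y = ?worst (restrict A {1..k})" using A(2) by simp
    ultimately show "y \<in> ?worst ` (PiE {1..k} (\<lambda>_. Pow S))" by blast
  qed
  then have "finite {?worst A | A. is_partition k S A}"
    by (rule finite_subset) (simp add: finite_PiE assms(1))
  moreover have "?worst C \<in> {?worst A | A. is_partition k S A}"
    using assms(3) by blast
  moreover have "t \<le> ?worst C"
    using assms(2,4) by (simp add: Min_ge_iff)
  ultimately show ?thesis
    unfolding mms_def by (meson Max_ge order_trans)
qed

lemma mms_ge_if_packing:
  fixes C :: "'i \<Rightarrow> nat set"
  assumes "finite S" "finite K" "card K = k" "k \<ge> 1" "\<forall>x\<in>S. 0 \<le> v a x"
    and "\<forall>j\<in>K. C j \<subseteq> S" "\<forall>j\<in>K. \<forall>j'\<in>K. j \<noteq> j' \<longrightarrow> C j \<inter> C j' = {}"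
    and "\<forall>j\<in>K. t \<le> val v a (C j)"
  shows "t \<le> mms v a k S"
proof -
  obtain h where h: "bij_betw h {1..k} K"
    using ex_bij_betw_nat_finite_1[OF assms(2)] assms(3) by blast
  define R where "R = S - (\<Union>j\<in>K. C j)"
  define D where "D l = C (h l) \<union> (if l = 1 then R else {})" for l
  have hK: "h l \<in> K" if "l \<in> {1..k}" for l
    using h that by (auto dest: bij_betw_apply)
  have DS: "D l \<subseteq> S" if "l \<in> {1..k}" for l
    using hK[OF that] assms(6) unfolding D_def R_def by auto
  have "is_partition k S D"
    unfolding is_partition_def
  proof (intro conjI ballI impI)
    fix l assume "l \<in> {1..k}"
    then show "D l \<subseteq> S" by (rule DS)
  next
    fix l l' assume "l \<in> {1..k}" "l' \<in> {1..k}" "l \<noteq> l'"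
    moreover from this have "h l \<noteq> h l'"
      using h unfolding bij_betw_def inj_on_def by blast
    ultimately show "D l \<inter> D l' = {}"
      using hK assms(7) unfolding D_def R_def by auto
  next
    have "(\<Union>l\<in>{1..k}. C (h l)) = (\<Union>j\<in>K. C j)"
      using bij_betw_imp_surj_on[OF h] by auto
    then show "(\<Union>l\<in>{1..k}. D l) = S"
      using assms(4,6) unfolding D_def R_def by (auto split: if_splits)
  qed
  moreover have "t \<le> val v a (D l)" if "l \<in> {1..k}" for l
  proof -
    have "val v a (C (h l)) \<le> val v a (D l)"
      unfolding val_def using finite_subset[OF DS[OF that] assms(1)] DS[OF that] assms(5)
      by (intro sum_mono2) (auto simp: D_def)
    then show ?thesis using assms(8) hK[OF that] by fastforce
  qed
  ultimately show ?thesis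
    using mms_ge_if_partition assms(1,4) by blast
qed

lemma mms_mono_remove_dominated_bundle:
  assumes ord: "ordered_instance n m v" and a: "a \<in> {1..n}" and n: "n \<ge> 2"
    and A: "mms_partition v a n {1..m} A" and j: "j \<in> {1..n}"
    and dom: "dominates (A j) B" and B: "B \<subseteq> {1..m}"
  shows "mms v a n {1..m} \<le> mms v a (n - 1) ({1..m} - B)"
proof -
  have Asub: "A k \<subseteq> {1..m}" if "k \<in> {1..n}" for k
    using A that unfolding mms_partition_def is_partition_def by blast
  have Adisj: "A k \<inter> A k' = {}" if "k \<in> {1..n}" "k' \<in> {1..n}" "k \<noteq> k'" for k k'
    using A that unfolding mms_partition_def is_partition_def by blast
  obtain g where g: "inj_on g (B - A j)" "g ` (B - A j) \<subseteq> A j - B" "\<forall>x\<in>B - A j. g x \<le> x"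
    using dominates_Diff[OF finite_subset[OF B] dom] unfolding dominates_def by blast
  define K where "K = {1..n} - {j}"
  define C where "C k = (A k - B) \<union> g ` (A k \<inter> B)" for k
  have AkB: "A k \<inter> B \<subseteq> B - A j" if "k \<in> K" for k
    using Adisj[of k j] that j unfolding K_def by blast
  have gAk: "g ` (A k \<inter> B) \<subseteq> A j - B" if "k \<in> K" for k
    using AkB[OF that] g(2) by blast
  show ?thesis
  proof (rule mms_ge_if_packing[where K = K and C = C])
    show "card K = n - 1" using j unfolding K_def by simp
    show "\<forall>x\<in>{1..m} - B. 0 \<le> v a x"
      using ord a unfolding ordered_instance_def by auto
    show "\<forall>k\<in>K. C k \<subseteq> {1..m} - B"
      using Asub gAk Asub[OF j] unfolding C_def K_def by blast
  next
    show "\<forall>k\<in>K. \<forall>k'\<in>K. k \<noteq> k' \<longrightarrow> C k \<inter> C k' = {}"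
    proof (intro ballI impI)
      fix k k' assume k: "k \<in> K" and k': "k' \<in> K" and "k \<noteq> k'"
      then have "A k \<inter> A k' = {}" "A k \<inter> A j = {}" "A k' \<inter> A j = {}"
        using Adisj j unfolding K_def by auto
      moreover have "g ` (A k \<inter> B) \<inter> g ` (A k' \<inter> B) = {}"
      proof -
        have "g ` (A k \<inter> B) \<inter> g ` (A k' \<inter> B) = g ` ((A k \<inter> B) \<inter> (A k' \<inter> B))"
          using inj_on_image_Int[OF g(1) AkB[OF k] AkB[OF k']] by simp
        with \<open>A k \<inter> A k' = {}\<close> show ?thesis by auto
      qed
      moreover have "g ` (A k \<inter> B) \<subseteq> A j" "g ` (A k' \<inter> B) \<subseteq> A j"
        using gAk[OF k] gAk[OF k'] by auto
      ultimately show "C k \<inter> C k' = {}"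
        unfolding C_def by (simp add: Int_Un_distrib Int_Un_distrib2) blast
    qed
  next
    show "\<forall>k\<in>K. mms v a n {1..m} \<le> val v a (C k)"
    proof
      fix k assume k: "k \<in> K"
      then have k1n: "k \<in> {1..n}" unfolding K_def by blast
      have fin: "finite (A k)" using finite_subset[OF Asub[OF k1n]] by simp
      have "dominates (g ` (A k \<inter> B)) (A k \<inter> B)"
        unfolding dominates_def using g AkB[OF k] by (blast intro: inj_on_subset)
      then have exchange: "val v a (A k \<inter> B) \<le> val v a (g ` (A k \<inter> B))"
        using Asub[OF k1n] Asub[OF j] gAk[OF k]
        by (intro val_le_if_dominates[OF ord a]) auto
      have "mms v a n {1..m} \<le> val v a (A k)"
        using A k1n unfolding mms_partition_def by blast
      also have "\<dots> = val v a (A k - B) + val v a (A k \<inter> B)"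
        unfolding val_def using sum.Int_Diff[OF fin, of "v a" B] by simp
      also have "\<dots> \<le> val v a (A k - B) + val v a (g ` (A k \<inter> B))"
        using exchange by simp
      also have "\<dots> = val v a (C k)"
        unfolding val_def C_def using fin Adisj[OF k1n j] k gAk[OF k] unfolding K_def
        by (intro sum.union_disjoint[symmetric]) auto
      finally show "mms v a n {1..m} \<le> val v a (C k)" .
    qed
  qed (use n in \<open>auto simp: K_def\<close>)
qed

theorem lemma11:
  fixes n m :: nat and v :: "nat \<Rightarrow> nat \<Rightarrow> real" and i :: nat and B :: "nat set"
  assumes "ordered_instance n m v"
    and "i \<in> {1..n}"
    and "B \<subseteq> {1..m}"
    and "val v i B \<ge> mms v i n {1..m}"
    and "\<forall>i'\<in>{1..n} - {i}. \<exists>A. mms_partition v i' n {1..m} A \<and>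
            (\<exists>j\<in>{1..n}. dominates (A j) B)"
  shows "valid_reduction n m v {i} B"
proof -
  have agents: "\<forall>a\<in>{1..n} - {i}. mms v a n {1..m} \<le> mms v a (n - card {i}) ({1..m} - B)"
  proof
    fix a assume a: "a \<in> {1..n} - {i}"
    obtain A j where A: "mms_partition v a n {1..m} A" and j: "j \<in> {1..n}"
      and dom: "dominates (A j) B"
      using assms(5) a by blast
    have "n \<ge> 2" using a assms(2) by auto
    from mms_mono_remove_dominated_bundle[OF assms(1) _ this A j dom assms(3)] a
    show "mms v a n {1..m} \<le> mms v a (n - card {i}) ({1..m} - B)" by simp
  qed
  have owner: "\<exists>Bs. (\<forall>a\<in>{i}. Bs a \<subseteq> B) \<and>
      (\<forall>a\<in>{i}. \<forall>a'\<in>{i}. a \<noteq> a' \<longrightarrow> Bs a \<inter> Bs a' = {}) \<and>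
      (\<Union>a\<in>{i}. Bs a) = B \<and> (\<forall>a\<in>{i}. mms v a n {1..m} \<le> val v a (Bs a))"
    by (rule exI[of _ "\<lambda>_. B"]) (use assms(4) in simp)
  show ?thesis
    unfolding valid_reduction_def using assms(2,3) agents owner by blast
qed

end
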